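(* Let $n,t$ be nonnegative integers with $n\ge 3t+1$, let $\mathcal S_1=\{1,\dots,n\}$ be the set of all nodes, and let $\mathcal F\subseteq \mathcal S_1$ be the set of dishonest nodes with $|\mathcal F|\le t$. Define a family of sets $(\mathcal S_g)_{g\ge 1}$ recursively: for each $g\ge1$, $\mathcal S_g$ is partitioned into two disjoint sets $\mathcal S_{2g}$ and $\mathcal S_{2g+1}$ with $\mathcal S_g=\mathcal S_{2g}\cup\mathcal S_{2g+1}$, $|\mathcal S_{2g}|=\lfloor|\mathcal S_g|/2\rfloor$ and $|\mathcal S_{2g+1}|=\lceil|\mathcal S_g|/2\rceil$ (the choice of partition is arbitrary subject to these sizes). Then there exists a network chain with good resilience: an infinite sequence of indices $g_1=1,g_2,g_3,\dots$ with $g_{r+1}\in\{2g_r,\,2g_r+1\}$ for all $r\ge1$ such that every $\mathcal S_{g_r}$ has good resilience, i.e. $|\mathcal S_{g_r}\cap\mathcal F|<|\mathcal S_{g_r}|/3$ for all $r\ge 1$. *)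

theory Defs
  imports Complex_Main
begin

end

theory Submission
  imports Defs
begin

text \<open>Starting from \<open>S 1\<close>, which has good
  resilience because \<open>n > 3 t\<close>, one can therefore always descend into a half with good
  resilience.\<close>

definition resilient :: "'a set \<Rightarrow> 'a set \<Rightarrow> bool" where
  "resilient F A \<longleftrightarrow> 3 * card (A \<inter> F) < card A"

lemma resilient_split:
  assumes "finite A" and "A = B \<union> C" and "B \<inter> C = {}" and "resilient F A"
  shows "resilient F B \<or> resilient F C"
proof -
  have "finite B" "finite C" using assms(1,2) by auto
  have "card A = card B + card C"
    using assms(2,3) \<open>finite B\<close> \<open>finite C\<close> by (simp add: card_Un_disjoint)
  moreover have "card (A \<inter> F) = card (B \<inter> F) + card (C \<inter> F)"
  proof -
    have "A \<inter> F = (B \<inter> F) \<union> (C \<inter> F)" "(B \<inter> F) \<inter> (C \<inter> F) = {}"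
      using assms(2,3) by blast+
    then show ?thesis using \<open>finite B\<close> \<open>finite C\<close> by (simp add: card_Un_disjoint)
  qed
  ultimately show ?thesis
    using assms(4) unfolding resilient_def by linarith
qed

lemma binary_descent_path:
  assumes "P g\<^sub>0" and "\<And>g. P g \<Longrightarrow> P (2 * g) \<or> P (2 * g + 1)"
  shows "\<exists>gs :: nat \<Rightarrow> nat. gs 0 = g\<^sub>0
           \<and> (\<forall>r. gs (Suc r) \<in> {2 * gs r, 2 * gs r + 1}) \<and> (\<forall>r. P (gs r))"
proof -
  define next_node where "next_node g = (if P (2 * g) then 2 * g else 2 * g + 1)" for g
  define gs where "gs r = (next_node ^^ r) g\<^sub>0" for r
  have "P (gs r)" for r
    by (induction r) (use assms in \<open>auto simp: gs_def next_node_def\<close>)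
  moreover have "gs (Suc r) \<in> {2 * gs r, 2 * gs r + 1}" for r
    by (simp add: gs_def next_node_def)
  ultimately show ?thesis
    by (intro exI[of _ gs]) (simp add: gs_def)
qed

theorem mainTheorem2:
  fixes n t :: nat and F :: "nat set" and S :: "nat \<Rightarrow> nat set"
  assumes "n \<ge> 3 * t + 1"
    and "F \<subseteq> {1..n}" and "card F \<le> t"
    and "S 1 = {1..n}"
    and "\<And>g. g \<ge> 1 \<Longrightarrow> S g = S (2 * g) \<union> S (2 * g + 1)"
    and "\<And>g. g \<ge> 1 \<Longrightarrow> S (2 * g) \<inter> S (2 * g + 1) = {}"
    and "\<And>g. g \<ge> 1 \<Longrightarrow> card (S (2 * g)) = nat \<lfloor>real (card (S g)) / 2\<rfloor>"
    and "\<And>g. g \<ge> 1 \<Longrightarrow> card (S (2 * g + 1)) = nat \<lceil>real (card (S g)) / 2\<rceil>"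
  shows "\<exists>gs :: nat \<Rightarrow> nat. gs 0 = 1
           \<and> (\<forall>r. gs (Suc r) \<in> {2 * gs r, 2 * gs r + 1})
           \<and> (\<forall>r. real (card (S (gs r) \<inter> F)) < real (card (S (gs r))) / 3)"
proof -
  define P where "P g \<longleftrightarrow> g \<ge> 1 \<and> finite (S g) \<and> resilient F (S g)" for g
  have "S 1 \<inter> F = F"
    using assms(2,4) by blast
  then have "P 1"
    using assms(1,3,4) by (simp add: P_def resilient_def)
  moreover have "P (2 * g) \<or> P (2 * g + 1)" if "P g" for g
  proof -
    have g: "g \<ge> 1" "finite (S g)" "resilient F (S g)" using that by (auto simp: P_def)
    have "finite (S (2 * g))" "finite (S (2 * g + 1))"
      using assms(5)[OF g(1)] g(2) by (metis finite_Un)+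
    moreover have "resilient F (S (2 * g)) \<or> resilient F (S (2 * g + 1))"
      using resilient_split[OF g(2) assms(5,6)[OF g(1)] g(3)] .
    ultimately show ?thesis using g(1) by (auto simp: P_def)
  qed
  ultimately obtain gs where "gs 0 = 1" "\<forall>r. gs (Suc r) \<in> {2 * gs r, 2 * gs r + 1}"
    and "\<forall>r. resilient F (S (gs r))"
    using binary_descent_path[of P 1] by (auto simp: P_def)
  moreover have "real (card (S (gs r) \<inter> F)) < real (card (S (gs r))) / 3" for r
  proof -
    have "3 * card (S (gs r) \<inter> F) < card (S (gs r))"
      using \<open>\<forall>r. resilient F (S (gs r))\<close> unfolding resilient_def by blast
    then show ?thesis by linarith
  qed
  ultimately show ?thesis
    by blast
qed

end
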